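(* Consider the system $x(t+1)=x(t)-L(t)x(t)$ and let $A_{\max}>0$ and $\alpha>0$ be constants such that almost surely $\sum_{i\in I}\sum_{j\ne i}a_{ij}(t)\le A_{\max}$ and $a_{ii}(t)\ge\alpha$ for all $i\in I$. If $\mathbf{1}^*\mathbb{E}(L(t))=0$, then $$\mathbb{E}[L(t)^*\mathbf{1}\mathbf{1}^*L(t)]\le\gamma\,\mathbb{E}[L(t)+L(t)^*-L(t)^*L(t)]\quad\text{with }\gamma=\frac{A_{\max}}{\alpha},$$ and consequently $\mathbb{E}[(\bar x(t)-\bar x(0))^2]\le\frac{\gamma}{N+\gamma}V(x(0))$ for all $t\ge0$.
   Context: Let $I$ be a finite set of $N$ nodes. For each $t\in\mathbb{Z}_{\ge0}$ let $A(t)=(a_{ij}(t))_{i,j\in I}$ be a random matrix with $a_{ij}(t)\ge 0$ and $\sum_{\ell\in I}a_{i\ell}(t)=1$ for all $i$ (so $a_{ii}(t)=1-\sum_{j\ne i}a_{ij}(t)$); the matrices $A(t)$ are i.i.d. in $t$. $L(t)$ is the Laplacian: $L_{ij}(t)=-a_{ij}(t)$ for $i\ne j$, $L_{ii}(t)=\sum_{j\ne i}a_{ij}(t)$. $x(0)\in\mathbb{R}^I$ is deterministic. $\mathbf{1}$ is the all-ones vector, $M^*$ the transpose; for $y\in\mathbb{R}^I$, $\bar y=\frac1N\sum_i y_i$, $V(y)=\frac1N\sum_i(y_i-\bar y)^2$. For square matrices, $A\le B$ means $A-B$ is negative semidefinite. *)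

theory Defs
  imports "HOL-Analysis.Analysis" "HOL-Probability.Probability"
begin

text \<open>Nodes are the elements of a finite type 'n, so N = CARD('n).
  Matrices are real^'n^'n, vectors real^'n.\<close>

definition lap :: "real^'n^'n \<Rightarrow> real^'n^'n" where
  "lap A = (\<chi> i j. if i = j then (\<Sum>k\<in>UNIV-{i}. A$i$k) else - A$i$j)"

definition ones_mat :: "real^'n^'n" where
  "ones_mat = (\<chi> i j. 1)"

definition mat_le :: "real^'n^'n \<Rightarrow> real^'n^'n \<Rightarrow> bool" where
  "mat_le A B \<longleftrightarrow> (\<forall>v. v \<bullet> ((A - B) *v v) \<le> 0)"

primrec traj :: "(nat \<Rightarrow> 'a \<Rightarrow> real^'n^'n) \<Rightarrow> real^'n \<Rightarrow> nat \<Rightarrow> 'a \<Rightarrow> real^'n" where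
  "traj A x0 0 \<omega> = x0"
| "traj A x0 (Suc t) \<omega> = traj A x0 t \<omega> - lap (A t \<omega>) *v traj A x0 t \<omega>"

definition vmean :: "real^'n \<Rightarrow> real" where
  "vmean y = (\<Sum>i\<in>UNIV. y$i) / real CARD('n)"

definition vvar :: "real^'n \<Rightarrow> real" where
  "vvar y = (\<Sum>i\<in>UNIV. (y$i - vmean y)^2) / real CARD('n)"

end

theory Submission
  imports Defs
begin

text \<open>
  For a single admissible
  weight matrix a with Laplacian L, Cauchy-Schwarz bounds (1* L v)^2 by Amax times the Dirichlet
  energy of v, and the heavy diagonal bounds alpha times that energy by
  |v|^2 - |v - L v|^2 - sum_k c_k v_k^2, where c_k are the column sums of L. The quadratic forms
  of L* 1 1* L and L + L* - L* L are exactly (1* L v)^2 and |v|^2 - |v - L v|^2, and E c_k = 0,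
  so taking expectations gives the matrix inequality.

  For the trajectory, the same pointwise estimate shows that V(x) = (1* x)^2 + gamma |x|^2
  decreases along a step up to a drift term sum_k g_k(x(t)) c_k(L(t)). Since x(t) depends only on
  A(0), ..., A(t-1), it is independent of A(t), so the drift has mean zero and E V(x(t)) <= V(x(0)).
  Applied to the centred initial state, together with (N + gamma) (1* x)^2 <= N V(x), this bounds
  E (mean deviation)^2 by gamma / (N + gamma) times the initial variance.
\<close>

text \<open>Column sums of a matrix; the hypothesis on the expected Laplacian says that its
  column sums vanish.\<close>
definition colsum :: "real^'m^'n \<Rightarrow> 'm \<Rightarrow> real" where
  "colsum X k = (\<Sum>i\<in>UNIV. X$i$k)"

definition admissible :: "real \<Rightarrow> real \<Rightarrow> real^'n^'n \<Rightarrow> bool" where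
  "admissible Amax \<alpha> a \<longleftrightarrow> (\<forall>i j. 0 \<le> a$i$j) \<and> (\<forall>i. (\<Sum>j\<in>UNIV. a$i$j) = 1)
     \<and> (\<Sum>i\<in>UNIV. \<Sum>j\<in>UNIV-{i}. a$i$j) \<le> Amax \<and> (\<forall>i. \<alpha> \<le> a$i$i)"

text \<open>The Dirichlet energy of a vector with respect to the weights, the quantity that
  mediates between the two sides of the key inequality.\<close>
definition dirichlet :: "real^'n^'n \<Rightarrow> real^'n \<Rightarrow> real" where
  "dirichlet a v = (\<Sum>i\<in>UNIV. \<Sum>j\<in>UNIV-{i}. a$i$j * (v$i - v$j)^2)"

definition lyap :: "real \<Rightarrow> real^'n \<Rightarrow> real" where
  "lyap \<gamma> v = (\<Sum>i\<in>UNIV. v$i)^2 + \<gamma> * (v \<bullet> v)"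

lemma sum_remove_UNIV:
  fixes f :: "'n::finite \<Rightarrow> real"
  shows "(\<Sum>j\<in>UNIV. f j) = f i + (\<Sum>j\<in>UNIV-{i}. f j)"
  by (simp add: sum.remove)

lemma lap_mult_vec_nth:
  "(lap a *v v) $ i = (\<Sum>j\<in>UNIV-{i}. a$i$j * (v$i - v$j))"
proof -
  have "(lap a *v v) $ i = lap a $i$i * v$i + (\<Sum>j\<in>UNIV-{i}. lap a $i$j * v$j)"
    by (simp add: matrix_vector_mult_def sum_remove_UNIV[of _ i])
  also have "(\<Sum>j\<in>UNIV-{i}. lap a $i$j * v$j) = (\<Sum>j\<in>UNIV-{i}. - a$i$j * v$j)"
    by (rule sum.cong) (auto simp: lap_def)
  finally show ?thesis
    by (simp add: lap_def sum_distrib_right right_diff_distrib sum_subtractf sum_negf)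
qed

lemma lap_mult_const: "lap a *v vec c = 0"
  by (simp add: vec_eq_iff lap_mult_vec_nth)

lemma sum_mult_vec:
  "(\<Sum>i\<in>UNIV. (X *v v)$i) = (\<Sum>k\<in>UNIV. colsum X k * v$k)"
  by (simp add: matrix_vector_mult_def colsum_def sum_distrib_right) (rule sum.swap)

lemma consensus_step_nth:
  assumes "(\<Sum>j\<in>UNIV. a$i$j) = 1"
  shows "(v - lap a *v v) $ i = (\<Sum>j\<in>UNIV. a$i$j * v$j)"
proof -
  have off_diag: "(\<Sum>j\<in>UNIV-{i}. a$i$j) = 1 - a$i$i"
    using assms sum_remove_UNIV[of "\<lambda>j. a$i$j" i] by simp
  have "(v - lap a *v v) $ i = v$i - (\<Sum>j\<in>UNIV-{i}. a$i$j) * v$i + (\<Sum>j\<in>UNIV-{i}. a$i$j * v$j)"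
    by (simp add: lap_mult_vec_nth right_diff_distrib sum_subtractf sum_distrib_right)
  also have "\<dots> = (\<Sum>j\<in>UNIV. a$i$j * v$j)"
    by (simp add: off_diag sum_remove_UNIV[of _ i] algebra_simps)
  finally show ?thesis .
qed

lemma colsum_lap:
  assumes "\<And>i. (\<Sum>j\<in>UNIV. a$i$j) = 1"
  shows "colsum (lap a) j = 1 - colsum a j"
proof -
  have "(\<Sum>k\<in>UNIV-{j}. a$j$k) = 1 - a$j$j"
    using assms[of j] sum_remove_UNIV[of "\<lambda>k. a$j$k" j] by simp
  moreover have "(\<Sum>i\<in>UNIV-{j}. lap a $i$j) = (\<Sum>i\<in>UNIV-{j}. - a $i$j)"
    by (rule sum.cong) (auto simp: lap_def)
  ultimately show ?thesis
    by (simp add: colsum_def sum_remove_UNIV[of _ j] lap_def sum_negf)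
qed

lemma weighted_pair_variance:
  fixes p u :: "'n::finite \<Rightarrow> real"
  assumes "(\<Sum>j\<in>UNIV. p j) = 1"
  shows "(\<Sum>j\<in>UNIV. \<Sum>k\<in>UNIV. p j * p k * (u j - u k)^2)
       = 2 * ((\<Sum>j\<in>UNIV. p j * (u j)^2) - (\<Sum>j\<in>UNIV. p j * u j)^2)"
proof -
  have "(\<Sum>j\<in>UNIV. \<Sum>k\<in>UNIV. p j * p k * (u j - u k)^2)
      = (\<Sum>j\<in>UNIV. \<Sum>k\<in>UNIV. p j * (u j)^2 * p k + p j * (p k * (u k)^2)
          - 2 * (p j * u j * (p k * u k)))"
    by (intro sum.cong refl) (simp add: power2_diff algebra_simps)
  also have "\<dots> = (\<Sum>j\<in>UNIV. p j * (u j)^2) * (\<Sum>k\<in>UNIV. p k)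
      + (\<Sum>j\<in>UNIV. p j) * (\<Sum>k\<in>UNIV. p k * (u k)^2)
      - 2 * ((\<Sum>j\<in>UNIV. p j * u j) * (\<Sum>k\<in>UNIV. p k * u k))"
    unfolding sum_product sum_distrib_left[of 2] by (simp add: sum.distrib sum_subtractf)
  finally show ?thesis
    using assms by (simp add: power2_eq_square)
qed

text \<open>A heavy diagonal weight controls the energy of row i by the variance of the row
  average: the pairs through i occur twice in the pair formula above, each with weight p_i.\<close>
lemma row_energy_le_variance:
  fixes p u :: "'n::finite \<Rightarrow> real"
  assumes nonneg: "\<And>j. 0 \<le> p j" and total: "(\<Sum>j\<in>UNIV. p j) = 1" and diag: "\<alpha> \<le> p i"
  shows "\<alpha> * (\<Sum>j\<in>UNIV-{i}. p j * (u i - u j)^2)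
       \<le> (\<Sum>j\<in>UNIV. p j * (u j)^2) - (\<Sum>j\<in>UNIV. p j * u j)^2"
proof -
  define f where "f j k = p j * p k * (u j - u k)^2" for j k
  define e where "e = (\<Sum>j\<in>UNIV-{i}. p j * (u i - u j)^2)"
  have e_nonneg: "0 \<le> e"
    unfolding e_def by (intro sum_nonneg) (simp add: nonneg)
  have row: "(\<Sum>k\<in>UNIV. f i k) = p i * e"
    by (simp add: f_def e_def sum_remove_UNIV[of _ i] sum_distrib_left mult.assoc)
  have col: "(\<Sum>j\<in>UNIV-{i}. f j i) = p i * e"
    by (simp add: f_def e_def sum_distrib_left power2_commute mult_ac)
  have "(\<Sum>j\<in>UNIV-{i}. f j i) \<le> (\<Sum>j\<in>UNIV-{i}. \<Sum>k\<in>UNIV. f j k)"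
    by (intro sum_mono member_le_sum) (auto simp: f_def nonneg)
  then have "2 * (p i * e) \<le> (\<Sum>j\<in>UNIV. \<Sum>k\<in>UNIV. f j k)"
    using row col sum_remove_UNIV[of "\<lambda>j. \<Sum>k\<in>UNIV. f j k" i] by linarith
  also have "\<dots> = 2 * ((\<Sum>j\<in>UNIV. p j * (u j)^2) - (\<Sum>j\<in>UNIV. p j * u j)^2)"
    unfolding f_def by (rule weighted_pair_variance[OF total])
  finally have "p i * e \<le> (\<Sum>j\<in>UNIV. p j * (u j)^2) - (\<Sum>j\<in>UNIV. p j * u j)^2"
    by simp
  moreover have "\<alpha> * e \<le> p i * e"
    using diag e_nonneg by (rule mult_right_mono)
  ultimately show ?thesis
    unfolding e_def by linarith
qed

lemma sum_lap_sq_le_dirichlet: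
  fixes a :: "real^'n^'n"
  assumes nonneg: "\<forall>i j. 0 \<le> a$i$j"
  shows "(\<Sum>i\<in>UNIV. (lap a *v v)$i)^2 \<le> (\<Sum>i\<in>UNIV. \<Sum>j\<in>UNIV-{i}. a$i$j) * dirichlet a v"
proof -
  define S where "S = Sigma (UNIV::'n set) (\<lambda>i. UNIV-{i})"
  have sigma: "(\<Sum>i\<in>UNIV. \<Sum>j\<in>UNIV-{i}. g i j) = (\<Sum>(i,j)\<in>S. g i j)" for g :: "'n \<Rightarrow> 'n \<Rightarrow> real"
    unfolding S_def by (rule sum.Sigma) auto
  have "(\<Sum>i\<in>UNIV. (lap a *v v)$i)^2
      = (\<Sum>(i,j)\<in>S. sqrt (a$i$j) * (sqrt (a$i$j) * (v$i - v$j)))^2"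
    by (simp add: lap_mult_vec_nth sigma mult.assoc[symmetric] nonneg)
  also have "\<dots> \<le> (\<Sum>(i,j)\<in>S. (sqrt (a$i$j))^2) * (\<Sum>(i,j)\<in>S. (sqrt (a$i$j) * (v$i - v$j))^2)"
    using Cauchy_Schwarz_ineq_sum[of "\<lambda>(i,j). sqrt (a$i$j)" "\<lambda>(i,j). sqrt (a$i$j) * (v$i - v$j)" S]
    by (simp add: case_prod_unfold)
  also have "\<dots> = (\<Sum>i\<in>UNIV. \<Sum>j\<in>UNIV-{i}. a$i$j) * dirichlet a v"
    by (simp add: sigma dirichlet_def power_mult_distrib nonneg)
  finally show ?thesis .
qed

lemma dirichlet_le_energy_drop:
  fixes a :: "real^'n^'n"
  assumes adm: "admissible Amax \<alpha> a"
  shows "\<alpha> * dirichlet a v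
       \<le> v \<bullet> v - (v - lap a *v v) \<bullet> (v - lap a *v v) - (\<Sum>k\<in>UNIV. colsum (lap a) k * (v$k)^2)"
proof -
  from adm have nonneg: "\<And>i j. 0 \<le> a$i$j" and rows: "\<And>i. (\<Sum>j\<in>UNIV. a$i$j) = 1"
    and diag: "\<And>i. \<alpha> \<le> a$i$i"
    unfolding admissible_def by auto
  have row: "\<alpha> * (\<Sum>j\<in>UNIV-{i}. a$i$j * (v$i - v$j)^2)
      \<le> (\<Sum>j\<in>UNIV. a$i$j * (v$j)^2) - ((v - lap a *v v) $ i)^2" for i
    unfolding consensus_step_nth[OF rows] by (rule row_energy_le_variance) (simp_all add: nonneg rows diag)
  have "\<alpha> * dirichlet a v \<le> (\<Sum>i\<in>UNIV. (\<Sum>j\<in>UNIV. a$i$j * (v$j)^2) - ((v - lap a *v v) $ i)^2)"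
    using sum_mono[OF row] by (simp add: dirichlet_def sum_distrib_left)
  also have "\<dots> = (\<Sum>k\<in>UNIV. colsum a k * (v$k)^2) - (v - lap a *v v) \<bullet> (v - lap a *v v)"
    by (simp add: sum_subtractf colsum_def sum_distrib_right inner_vec_def power2_eq_square)
      (rule sum.swap)
  also have "(\<Sum>k\<in>UNIV. colsum a k * (v$k)^2) = v \<bullet> v - (\<Sum>k\<in>UNIV. colsum (lap a) k * (v$k)^2)"
    by (simp add: colsum_lap[OF rows] algebra_simps sum_subtractf inner_vec_def power2_eq_square)
  finally show ?thesis
    by simp
qed

lemma laplacian_energy_ineq:
  fixes a :: "real^'n^'n"
  assumes adm: "admissible Amax \<alpha> a" and pos: "0 < \<alpha>"
  shows "(\<Sum>i\<in>UNIV. (lap a *v v)$i)^2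
       \<le> (Amax / \<alpha>) * (v \<bullet> v - (v - lap a *v v) \<bullet> (v - lap a *v v)
                       - (\<Sum>k\<in>UNIV. colsum (lap a) k * (v$k)^2))"
    (is "_ \<le> _ * ?drop")
proof -
  from adm have nonneg: "\<forall>i j. 0 \<le> a$i$j" and off: "(\<Sum>i\<in>UNIV. \<Sum>j\<in>UNIV-{i}. a$i$j) \<le> Amax"
    unfolding admissible_def by auto
  have "0 \<le> (\<Sum>i\<in>UNIV. \<Sum>j\<in>UNIV-{i}. a$i$j)"
    using nonneg by (intro sum_nonneg) auto
  then have Amax_nonneg: "0 \<le> Amax"
    using off by linarith
  have "0 \<le> dirichlet a v"
    unfolding dirichlet_def using nonneg by (intro sum_nonneg mult_nonneg_nonneg) auto
  then have "(\<Sum>i\<in>UNIV. (lap a *v v)$i)^2 \<le> Amax * dirichlet a v"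
    using sum_lap_sq_le_dirichlet[OF nonneg, of v] off mult_right_mono order_trans by blast
  also have "\<dots> = (Amax / \<alpha>) * (\<alpha> * dirichlet a v)"
    using pos by simp
  also have "\<dots> \<le> (Amax / \<alpha>) * ?drop"
    using dirichlet_le_energy_drop[OF adm] Amax_nonneg pos by (intro mult_left_mono) auto
  finally show ?thesis .
qed

lemma quad_form_ones:
  fixes L :: "real^'n^'n"
  shows "v \<bullet> ((transpose L ** ones_mat ** L) *v v) = (\<Sum>i\<in>UNIV. (L *v v)$i)^2"
proof -
  have ones: "ones_mat *v w = vec (\<Sum>i\<in>UNIV. w$i)" for w :: "real^'n"
    by (simp add: vec_eq_iff ones_mat_def matrix_vector_mult_def)
  have "(transpose L ** ones_mat ** L) *v v = transpose L *v (ones_mat *v (L *v v))"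
    by (simp only: matrix_vector_mul_assoc[symmetric])
  then have "v \<bullet> ((transpose L ** ones_mat ** L) *v v) = v \<bullet> (transpose L *v (ones_mat *v (L *v v)))"
    by simp
  also have "\<dots> = (ones_mat *v (L *v v)) \<bullet> (L *v v)"
    by (simp only: transpose_matrix_vector inner_commute[of v] dot_lmul_matrix)
  also have "\<dots> = (\<Sum>i\<in>UNIV. (L *v v)$i)^2"
    by (simp add: ones inner_vec_def power2_eq_square sum_distrib_left)
  finally show ?thesis .
qed

lemma quad_form_energy_drop:
  fixes L :: "real^'n^'n"
  shows "v \<bullet> ((L + transpose L - transpose L ** L) *v v) = v \<bullet> v - (v - L *v v) \<bullet> (v - L *v v)"
proof -
  have transp: "w \<bullet> (transpose L *v u) = (L *v w) \<bullet> u" for w u :: "real^'n"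
    by (metis dot_lmul_matrix inner_commute transpose_matrix_vector)
  have "v \<bullet> ((L + transpose L - transpose L ** L) *v v)
      = v \<bullet> (L *v v) + v \<bullet> (transpose L *v v) - v \<bullet> (transpose L *v (L *v v))"
    by (simp only: matrix_vector_mult_add_rdistrib matrix_vector_mult_diff_rdistrib
        matrix_vector_mul_assoc[symmetric] inner_add_right inner_diff_right)
  also have "\<dots> = v \<bullet> v - (v - L *v v) \<bullet> (v - L *v v)"
    unfolding transp by (simp add: inner_diff_left inner_diff_right inner_commute)
  finally show ?thesis .
qed

lemma lyap_step:
  fixes a :: "real^'n^'n"
  assumes adm: "admissible Amax \<alpha> a" and pos: "0 < \<alpha>"
  shows "lyap (Amax / \<alpha>) (v - lap a *v v)
       \<le> lyap (Amax / \<alpha>) v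
          - (\<Sum>k\<in>UNIV. (2 * (\<Sum>i\<in>UNIV. v$i) * v$k + (Amax / \<alpha>) * (v$k)^2) * colsum (lap a) k)"
proof -
  define \<gamma> where "\<gamma> = Amax / \<alpha>"
  define S where "S = (\<Sum>i\<in>UNIV. v$i)"
  define r where "r = (\<Sum>i\<in>UNIV. (lap a *v v)$i)"
  define Y where "Y = (\<Sum>k\<in>UNIV. colsum (lap a) k * (v$k)^2)"
  define W where "W = (v - lap a *v v) \<bullet> (v - lap a *v v)"
  have "(\<Sum>i\<in>UNIV. (v - lap a *v v)$i) = S - r"
    by (simp add: S_def r_def sum_subtractf)
  then have "lyap \<gamma> (v - lap a *v v) = S^2 - 2 * S * r + r^2 + \<gamma> * W"
    by (simp add: lyap_def W_def power2_diff)
  also have "r^2 \<le> \<gamma> * (v \<bullet> v - W - Y)"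
    unfolding r_def \<gamma>_def Y_def W_def by (rule laplacian_energy_ineq[OF adm pos])
  finally have "lyap \<gamma> (v - lap a *v v) \<le> lyap \<gamma> v - (2 * S * r + \<gamma> * Y)"
    by (simp add: lyap_def S_def algebra_simps)
  also have "2 * S * r + \<gamma> * Y = (\<Sum>k\<in>UNIV. (2 * S * v$k + \<gamma> * (v$k)^2) * colsum (lap a) k)"
    by (simp add: r_def Y_def sum_mult_vec sum_distrib_left sum.distrib algebra_simps)
  finally show ?thesis
    by (simp add: \<gamma>_def S_def)
qed

lemma sum_sq_le_lyap:
  fixes z :: "real^'n"
  assumes "0 \<le> \<gamma>"
  shows "(real CARD('n) + \<gamma>) * (\<Sum>i\<in>UNIV. z$i)^2 \<le> real CARD('n) * lyap \<gamma> z"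
proof -
  have "(\<Sum>i\<in>UNIV. 1 * z$i)^2 \<le> (\<Sum>i\<in>(UNIV::'n set). 1^2) * (\<Sum>i\<in>UNIV. (z$i)^2)"
    by (rule Cauchy_Schwarz_ineq_sum)
  then have "(\<Sum>i\<in>UNIV. z$i)^2 \<le> real CARD('n) * (z \<bullet> z)"
    by (simp add: inner_vec_def power2_eq_square)
  then show ?thesis
    using assms by (simp add: lyap_def algebra_simps mult_left_mono)
qed

text \<open>A consensus step is a convex combination, so it preserves bounds on the entries.\<close>
lemma consensus_step_bound:
  fixes a :: "real^'n^'n"
  assumes adm: "admissible Amax \<alpha> a" and bound: "\<And>j. \<bar>v$j\<bar> \<le> B"
  shows "\<bar>(v - lap a *v v)$i\<bar> \<le> B"
proof -
  from adm have nonneg: "\<And>i j. 0 \<le> a$i$j" and rows: "\<And>i. (\<Sum>j\<in>UNIV. a$i$j) = 1"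
    unfolding admissible_def by auto
  have "\<bar>(v - lap a *v v)$i\<bar> \<le> (\<Sum>j\<in>UNIV. \<bar>a$i$j * v$j\<bar>)"
    unfolding consensus_step_nth[OF rows] by (rule sum_abs)
  also have "\<dots> \<le> (\<Sum>j\<in>UNIV. a$i$j * B)"
    by (intro sum_mono) (simp add: abs_mult nonneg mult_left_mono bound)
  also have "\<dots> = B"
    by (simp add: sum_distrib_right[symmetric] rows)
  finally show ?thesis .
qed

lemma mem_cube_iff:
  fixes x :: "real^'n"
  shows "x \<in> cbox (- vec r) (vec r) \<longleftrightarrow> (\<forall>i. \<bar>x$i\<bar> \<le> r)"
  by (simp add: mem_box_cart abs_le_iff minus_le_iff conj_commute)

lemma admissible_in_unit_cube:
  fixes a :: "real^'n^'n"
  assumes adm: "admissible Amax \<alpha> a"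
  shows "a \<in> cbox 0 ones_mat"
proof -
  from adm have nonneg: "\<And>i j. 0 \<le> a$i$j" and rows: "\<And>i. (\<Sum>j\<in>UNIV. a$i$j) = 1"
    unfolding admissible_def by auto
  have "a$i$j \<le> 1" for i j
    using member_le_sum[of j UNIV "\<lambda>j. a$i$j"] nonneg rows[of i] by auto
  then show ?thesis
    by (auto simp: mem_box Basis_vec_def inner_axis ones_mat_def nonneg)
qed

text \<open>Continuity of the matrix operations involved, used to obtain measurability and
  (via compactness) integrability of all random quantities.\<close>
lemma continuous_on_lap: "continuous_on UNIV (lap :: real^'n^'n \<Rightarrow> _)"
  unfolding lap_def
proof (intro continuous_on_vec_lambda)
  fix i j :: 'n
  show "continuous_on UNIV (\<lambda>x::real^'n^'n. if i = j then \<Sum>k\<in>UNIV-{i}. x$i$k else - x$i$j)"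
    by (cases "i = j") (simp_all add: continuous_on_sum continuous_on_minus continuous_on_component)
qed

lemma continuous_on_matrix_mult[continuous_intros]:
  fixes f :: "'a::topological_space \<Rightarrow> real^'n^'m" and g :: "'a \<Rightarrow> real^'k^'n"
  shows "continuous_on S f \<Longrightarrow> continuous_on S g \<Longrightarrow> continuous_on S (\<lambda>x. f x ** g x)"
  unfolding matrix_matrix_mult_def by (intro continuous_intros)

lemma continuous_on_transpose[continuous_intros]:
  fixes f :: "'a::topological_space \<Rightarrow> real^'n^'m"
  shows "continuous_on S f \<Longrightarrow> continuous_on S (\<lambda>x. transpose (f x))"
  unfolding transpose_def by (intro continuous_intros)

lemma continuous_on_matrix_vector_mult[continuous_intros]:
  fixes f :: "'a::topological_space \<Rightarrow> real^'n^'m" and g :: "'a \<Rightarrow> real^'n"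
  shows "continuous_on S f \<Longrightarrow> continuous_on S g \<Longrightarrow> continuous_on S (\<lambda>x. f x *v g x)"
  unfolding matrix_vector_mult_def by (intro continuous_intros)

lemma continuous_on_consensus_step:
  "continuous_on UNIV (\<lambda>x :: (real^'n^'n) \<times> (real^'n). snd x - lap (fst x) *v snd x)"
  by (intro continuous_intros continuous_on_compose2[OF continuous_on_lap]) auto

lemma (in finite_measure) integrable_continuous_compact:
  fixes f :: "'b::topological_space \<Rightarrow> 'c::{banach, second_countable_topology}"
  assumes X: "X \<in> borel_measurable M" and in_K: "AE \<omega> in M. X \<omega> \<in> K" and "compact K"
    and f: "continuous_on UNIV f"
  shows "integrable M (\<lambda>\<omega>. f (X \<omega>))"
proof -
  have "compact (f ` K)"
    using continuous_on_subset[OF f subset_UNIV] \<open>compact K\<close> by (rule compact_continuous_image)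
  then obtain B where B: "\<And>y. y \<in> f ` K \<Longrightarrow> norm y \<le> B"
    using compact_imp_bounded bounded_iff by metis
  show ?thesis
  proof (rule integrable_const_bound)
    show "AE \<omega> in M. norm (f (X \<omega>)) \<le> B"
      using in_K by eventually_elim (rule B, simp)
    show "(\<lambda>\<omega>. f (X \<omega>)) \<in> borel_measurable M"
      using borel_measurable_continuous_onI[OF f] X by measurable
  qed
qed

lemma traj_cong:
  "(\<And>i. i < t \<Longrightarrow> A i \<omega> = B i \<omega>') \<Longrightarrow> traj A x t \<omega> = traj B x t \<omega>'"
  by (induction t) auto

lemma traj_shift: "traj A (x + vec c) t \<omega> = traj A x t \<omega> + vec c"
  by (induction t) (simp_all add: matrix_vector_right_distrib lap_mult_const)

lemma measurable_traj_prefix: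
  "s \<le> t \<Longrightarrow> (\<lambda>f. traj (\<lambda>i (_::unit). f i) v s ()) \<in> borel_measurable (Pi\<^sub>M {..<t} (\<lambda>_. borel))"
proof (induction s)
  case (Suc s)
  then have "(\<lambda>f. f s) \<in> Pi\<^sub>M {..<t} (\<lambda>_. borel) \<rightarrow>\<^sub>M (borel :: (real^'n^'n) measure)"
    by (intro measurable_component_singleton) auto
  with Suc show ?case
    by (simp add: borel_measurable_continuous_Pair[OF _ _ continuous_on_consensus_step])
qed simp

text \<open>The setting of the theorem: i.i.d. is only needed in the form of independence,
  together with the almost-sure hypotheses and the vanishing column sums of E L(t).\<close>
locale random_consensus = prob_space M for M :: "'a measure" +
  fixes A :: "nat \<Rightarrow> 'a \<Rightarrow> real^'n::finite^'n" and Amax \<alpha> :: real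
  assumes measurable_A [measurable]: "\<And>t. A t \<in> borel_measurable M"
    and indep_A: "indep_vars (\<lambda>_. borel) A UNIV"
    and admissible_A: "\<And>t. AE \<omega> in M. admissible Amax \<alpha> (A t \<omega>)"
    and alpha_pos: "0 < \<alpha>" and Amax_pos: "0 < Amax"
    and mean_lap_colsum: "\<And>t. vec 1 v* (\<integral>\<omega>. lap (A t \<omega>) \<partial>M) = 0"
begin

lemma integrable_fun_lap:
  fixes g :: "real^'n^'n \<Rightarrow> 'b::{banach, second_countable_topology}"
  assumes "continuous_on UNIV g"
  shows "integrable M (\<lambda>\<omega>. g (lap (A t \<omega>)))"
proof (rule integrable_continuous_compact[where f="\<lambda>a. g (lap a)", OF measurable_A _ compact_cbox])
  show "AE \<omega> in M. A t \<omega> \<in> cbox 0 ones_mat"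
    using admissible_A[of t] by eventually_elim (rule admissible_in_unit_cube)
  show "continuous_on UNIV (\<lambda>a. g (lap a))"
    using continuous_on_compose2[OF assms continuous_on_lap] by simp
qed

lemma integrable_colsum_lap: "integrable M (\<lambda>\<omega>. colsum (lap (A t \<omega>)) k)"
  by (rule integrable_fun_lap[of "\<lambda>X. colsum X k"]) (unfold colsum_def, intro continuous_intros)

lemma expected_colsum_lap: "(\<integral>\<omega>. colsum (lap (A t \<omega>)) k \<partial>M) = 0"
proof -
  have "bounded_linear (\<lambda>X :: real^'n^'n. colsum X k)"
    unfolding linear_conv_bounded_linear[symmetric]
    by (rule linearI) (simp_all add: colsum_def sum.distrib sum_distrib_left)
  then have "(\<integral>\<omega>. colsum (lap (A t \<omega>)) k \<partial>M) = colsum (\<integral>\<omega>. lap (A t \<omega>) \<partial>M) k"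
    using integral_bounded_linear integrable_fun_lap[of "\<lambda>X. X"] continuous_on_id by auto
  also have "\<dots> = (vec 1 v* (\<integral>\<omega>. lap (A t \<omega>) \<partial>M)) $ k"
    by (simp add: colsum_def vector_matrix_mult_def)
  finally show ?thesis
    using mean_lap_colsum[of t] by simp
qed

text \<open>First claim of the theorem: the expected matrix inequality, obtained by testing the
  pointwise energy inequality against an arbitrary vector; the column-sum term drops out in
  expectation.\<close>
theorem expected_laplacian_ineq:
  "mat_le (\<integral>\<omega>. transpose (lap (A t \<omega>)) ** ones_mat ** lap (A t \<omega>) \<partial>M)
          ((Amax / \<alpha>) *\<^sub>R (\<integral>\<omega>. lap (A t \<omega>) + transpose (lap (A t \<omega>))
                                 - transpose (lap (A t \<omega>)) ** lap (A t \<omega>) \<partial>M))"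
  unfolding mat_le_def
proof
  fix v :: "real^'n"
  define \<gamma> where "\<gamma> = Amax / \<alpha>"
  define \<Phi> where "\<Phi> X = v \<bullet> (X *v v)" for X :: "real^'n^'n"
  define B where "B X = transpose X ** ones_mat ** X" for X :: "real^'n^'n"
  define C where "C X = X + transpose X - transpose X ** X" for X :: "real^'n^'n"
  define G where "G X = (\<Sum>k\<in>UNIV. colsum X k * (v$k)^2)" for X :: "real^'n^'n"
  have \<Phi>: "bounded_linear \<Phi>"
    unfolding linear_conv_bounded_linear[symmetric] \<Phi>_def
    by (rule linearI) (simp_all add: matrix_vector_mult_add_rdistrib inner_add_right
        scaleR_matrix_vector_assoc[symmetric])
  have int_B: "integrable M (\<lambda>\<omega>. B (lap (A t \<omega>)))"
    unfolding B_def by (rule integrable_fun_lap) (intro continuous_intros)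
  have int_C: "integrable M (\<lambda>\<omega>. C (lap (A t \<omega>)))"
    unfolding C_def by (rule integrable_fun_lap) (intro continuous_intros)
  have int_G: "integrable M (\<lambda>\<omega>. G (lap (A t \<omega>)))"
    unfolding G_def by (intro Bochner_Integration.integrable_sum integrable_mult_left integrable_colsum_lap)
  have E_G: "(\<integral>\<omega>. G (lap (A t \<omega>)) \<partial>M) = 0"
    by (simp add: G_def Bochner_Integration.integral_sum integrable_colsum_lap expected_colsum_lap)
  have "(\<integral>\<omega>. \<Phi> (B (lap (A t \<omega>))) \<partial>M) \<le> (\<integral>\<omega>. \<gamma> * (\<Phi> (C (lap (A t \<omega>))) - G (lap (A t \<omega>))) \<partial>M)"
  proof (rule integral_mono_AE)
    show "AE \<omega> in M. \<Phi> (B (lap (A t \<omega>))) \<le> \<gamma> * (\<Phi> (C (lap (A t \<omega>))) - G (lap (A t \<omega>)))"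
      using admissible_A[of t]
      by eventually_elim
        (simp only: \<Phi>_def B_def C_def G_def \<gamma>_def quad_form_ones quad_form_energy_drop,
          rule laplacian_energy_ineq[OF _ alpha_pos])
  qed (use integrable_bounded_linear[OF \<Phi> int_B] integrable_bounded_linear[OF \<Phi> int_C] int_G in auto)
  also have "\<dots> = \<gamma> * (\<integral>\<omega>. \<Phi> (C (lap (A t \<omega>))) \<partial>M)"
    using integrable_bounded_linear[OF \<Phi> int_C] int_G E_G by simp
  finally show "v \<bullet> ((integral\<^sup>L M (\<lambda>\<omega>. B (lap (A t \<omega>)))
                   - \<gamma> *\<^sub>R integral\<^sup>L M (\<lambda>\<omega>. C (lap (A t \<omega>)))) *v v) \<le> 0"
    using integral_bounded_linear[OF \<Phi> int_B] integral_bounded_linear[OF \<Phi> int_C]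
    by (simp add: \<Phi>_def matrix_vector_mult_diff_rdistrib scaleR_matrix_vector_assoc[symmetric] inner_diff_right)
qed

lemma measurable_traj [measurable]: "traj A v t \<in> borel_measurable M"
  by (induction t)
    (simp_all add: borel_measurable_continuous_Pair[OF measurable_A _ continuous_on_consensus_step])

lemma traj_in_cube: "AE \<omega> in M. traj A v t \<omega> \<in> cbox (- vec (norm v)) (vec (norm v))"
proof (induction t)
  case 0
  show ?case
    using component_le_norm_cart[of v] by (simp add: mem_cube_iff)
next
  case (Suc t)
  from admissible_A[of t] Suc.IH show ?case
    by eventually_elim (simp only: mem_cube_iff traj.simps, blast intro: consensus_step_bound)
qed

lemma integrable_fun_traj:
  fixes g :: "real^'n \<Rightarrow> real"
  assumes "continuous_on UNIV g"
  shows "integrable M (\<lambda>\<omega>. g (traj A v t \<omega>))"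
  using integrable_continuous_compact[OF measurable_traj traj_in_cube compact_cbox assms] .

text \<open>The state at time t depends only on A 0, ..., A (t - 1) and is therefore independent
  of A t; hence expectations of products factorise.\<close>
lemma traj_indep_present:
  fixes g :: "real^'n \<Rightarrow> real" and \<phi> :: "real^'n^'n \<Rightarrow> real"
  assumes g: "continuous_on UNIV g"
    and \<phi>: "\<phi> \<in> borel_measurable borel" "integrable M (\<lambda>\<omega>. \<phi> (A t \<omega>))"
  shows "has_bochner_integral M (\<lambda>\<omega>. g (traj A v t \<omega>) * \<phi> (A t \<omega>))
           ((\<integral>\<omega>. g (traj A v t \<omega>) \<partial>M) * (\<integral>\<omega>. \<phi> (A t \<omega>) \<partial>M))"
proof -
  define past where "past \<omega> = restrict (\<lambda>i. A i \<omega>) {..<t}" for \<omega>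
  define Z where "Z f = traj (\<lambda>i (_::unit). f i) v t ()" for f :: "nat \<Rightarrow> real^'n^'n"
  have traj_past: "traj A v t \<omega> = Z (past \<omega>)" for \<omega>
    unfolding Z_def past_def by (rule traj_cong) simp
  have "indep_var borel ((\<lambda>f. g (Z f)) \<circ> past) borel ((\<lambda>f. \<phi> (f t)) \<circ> (\<lambda>\<omega>. restrict (\<lambda>i. A i \<omega>) {t}))"
    unfolding past_def Z_def
    by (intro indep_var_compose[OF indep_var_restrict[OF indep_A]]
        measurable_compose[OF measurable_traj_prefix borel_measurable_continuous_onI[OF g]]
        measurable_compose[OF measurable_component_singleton[where M="\<lambda>_. borel"] \<phi>(1)]) auto
  then have "indep_var borel (\<lambda>\<omega>. g (traj A v t \<omega>)) borel (\<lambda>\<omega>. \<phi> (A t \<omega>))"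
    by (simp add: comp_def traj_past)
  then show ?thesis
    using integrable_fun_traj[OF g] \<phi>(2)
    by (simp add: has_bochner_integral_iff indep_var_lebesgue_integral indep_var_integrable)
qed

text \<open>In expectation the Lyapunov function does not increase: the drift term of the
  one-step inequality is a sum of products of a function of the current state and a column sum
  of the independent Laplacian, whose mean vanishes.\<close>
lemma expected_lyap_step:
  "(\<integral>\<omega>. lyap (Amax / \<alpha>) (traj A v (Suc t) \<omega>) \<partial>M) \<le> (\<integral>\<omega>. lyap (Amax / \<alpha>) (traj A v t \<omega>) \<partial>M)"
proof -
  define \<gamma> where "\<gamma> = Amax / \<alpha>"
  define w where "w k z = 2 * (\<Sum>i\<in>UNIV. z$i) * z$k + \<gamma> * (z$k)^2" for k and z :: "real^'n"
  define drift where "drift \<omega> = (\<Sum>k\<in>UNIV. w k (traj A v t \<omega>) * colsum (lap (A t \<omega>)) k)" for \<omega>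
  have w_cont: "continuous_on UNIV (w k)" for k
    unfolding w_def by (intro continuous_intros)
  have colsum_lap_meas: "(\<lambda>a :: real^'n^'n. colsum (lap a) k) \<in> borel_measurable borel" for k
    using continuous_on_lap unfolding colsum_def
    by (intro borel_measurable_continuous_onI continuous_intros)
  have lyap_cont: "continuous_on UNIV (lyap \<gamma> :: real^'n \<Rightarrow> real)"
    unfolding lyap_def[abs_def] by (intro continuous_intros)
  have "has_bochner_integral M drift 0"
    unfolding drift_def
    using has_bochner_integral_sum[OF traj_indep_present[OF w_cont colsum_lap_meas integrable_colsum_lap]]
    by (simp add: expected_colsum_lap)
  then have int_drift: "integrable M drift" and E_drift: "(\<integral>\<omega>. drift \<omega> \<partial>M) = 0"
    by (simp_all add: has_bochner_integral_iff)
  have "(\<integral>\<omega>. lyap \<gamma> (traj A v (Suc t) \<omega>) \<partial>M) \<le> (\<integral>\<omega>. lyap \<gamma> (traj A v t \<omega>) - drift \<omega> \<partial>M)"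
  proof (rule integral_mono_AE)
    show "AE \<omega> in M. lyap \<gamma> (traj A v (Suc t) \<omega>) \<le> lyap \<gamma> (traj A v t \<omega>) - drift \<omega>"
      using admissible_A[of t]
      by eventually_elim (simp only: \<gamma>_def w_def drift_def traj.simps, rule lyap_step[OF _ alpha_pos])
  qed (use integrable_fun_traj[OF lyap_cont, of v] int_drift in \<open>auto simp del: traj.simps\<close>)
  also have "\<dots> = (\<integral>\<omega>. lyap \<gamma> (traj A v t \<omega>) \<partial>M)"
    using integrable_fun_traj[OF lyap_cont] int_drift E_drift by simp
  finally show ?thesis
    by (simp add: \<gamma>_def)
qed

lemma expected_lyap_bound: "(\<integral>\<omega>. lyap (Amax / \<alpha>) (traj A v t \<omega>) \<partial>M) \<le> lyap (Amax / \<alpha>) v"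
proof (induction t)
  case 0
  show ?case
    by (simp add: prob_space)
next
  case (Suc t)
  then show ?case
    using expected_lyap_step order_trans by blast
qed

theorem expected_mean_deviation:
  "(\<integral>\<omega>. (vmean (traj A x0 t \<omega>) - vmean x0)^2 \<partial>M)
     \<le> (Amax / \<alpha>) / (real CARD('n) + Amax / \<alpha>) * vvar x0"
proof -
  define \<gamma> where "\<gamma> = Amax / \<alpha>"
  define N where "N = real CARD('n)"
  define z0 where "z0 = x0 - vec (vmean x0)"
  define s2 where "s2 \<omega> = (\<Sum>i\<in>UNIV. traj A z0 t \<omega> $ i)^2" for \<omega>
  have \<gamma>_pos: "0 < \<gamma>" and N_pos: "0 < N"
    using alpha_pos Amax_pos by (simp_all add: \<gamma>_def N_def)
  have "(\<Sum>i\<in>UNIV. z0$i) = 0"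
    by (simp add: z0_def vmean_def sum_subtractf)
  moreover have "z0 \<bullet> z0 = N * vvar x0"
    by (simp add: z0_def vvar_def N_def inner_vec_def power2_eq_square)
  ultimately have lyap_z0: "lyap \<gamma> z0 = \<gamma> * N * vvar x0"
    by (simp add: lyap_def)
  have deviation: "(vmean (traj A x0 t \<omega>) - vmean x0)^2 = s2 \<omega> / N^2" for \<omega>
    using traj_shift[of A z0 "vmean x0" t \<omega>]
    by (simp add: z0_def s2_def vmean_def N_def sum.distrib add_divide_distrib power_divide)
  have lyap_cont: "continuous_on UNIV (lyap \<gamma> :: real^'n \<Rightarrow> real)"
    unfolding lyap_def[abs_def] by (intro continuous_intros)
  have int_s2: "integrable M s2"
    unfolding s2_def by (rule integrable_fun_traj) (intro continuous_intros)
  have "(\<integral>\<omega>. (N + \<gamma>) * s2 \<omega> \<partial>M) \<le> (\<integral>\<omega>. N * lyap \<gamma> (traj A z0 t \<omega>) \<partial>M)"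
  proof (rule integral_mono)
    show "(N + \<gamma>) * s2 \<omega> \<le> N * lyap \<gamma> (traj A z0 t \<omega>)" for \<omega>
      using sum_sq_le_lyap[of \<gamma> "traj A z0 t \<omega>"] \<gamma>_pos by (simp add: s2_def N_def)
  qed (use int_s2 integrable_fun_traj[OF lyap_cont] in auto)
  then have "(N + \<gamma>) * (\<integral>\<omega>. s2 \<omega> \<partial>M) \<le> N * (\<integral>\<omega>. lyap \<gamma> (traj A z0 t \<omega>) \<partial>M)"
    by simp
  also have "\<dots> \<le> N * (\<gamma> * N * vvar x0)"
    using expected_lyap_bound[of z0 t] lyap_z0 N_pos unfolding \<gamma>_def[symmetric]
    by (intro mult_left_mono) auto
  finally have "(\<integral>\<omega>. s2 \<omega> \<partial>M) / N^2 \<le> \<gamma> / (N + \<gamma>) * vvar x0"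
    using N_pos \<gamma>_pos by (simp add: field_simps power2_eq_square)
  then show ?thesis
    by (simp add: deviation \<gamma>_def N_def)
qed

end

text \<open>The hypotheses of the theorem describe exactly a random consensus system in the sense
  of the locale, so both claims follow from the locale.\<close>
theorem theorem3:
  fixes M :: "'a measure" and A :: "nat \<Rightarrow> 'a \<Rightarrow> real^'n^'n"
    and x0 :: "real^'n" and Amax \<alpha> :: real
  assumes "prob_space M"
    and "\<And>t. A t \<in> borel_measurable M"
    and "prob_space.indep_vars M (\<lambda>_. borel) A UNIV"
    and "\<And>t. distr M borel (A t) = distr M borel (A 0)"
    and "\<And>t. AE \<omega> in M. \<forall>i j. A t \<omega> $ i $ j \<ge> 0"
    and "\<And>t. AE \<omega> in M. \<forall>i. (\<Sum>j\<in>UNIV. A t \<omega> $ i $ j) = 1"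
    and "Amax > 0" and "\<alpha> > 0"
    and "\<And>t. AE \<omega> in M. (\<Sum>i\<in>UNIV. \<Sum>j\<in>UNIV-{i}. A t \<omega> $ i $ j) \<le> Amax"
    and "\<And>t. AE \<omega> in M. \<forall>i. A t \<omega> $ i $ i \<ge> \<alpha>"
    and "\<And>t. vec 1 v* (integral\<^sup>L M (\<lambda>\<omega>. lap (A t \<omega>))) = 0"
  shows "(\<forall>t. mat_le
            (integral\<^sup>L M (\<lambda>\<omega>. transpose (lap (A t \<omega>)) ** ones_mat ** lap (A t \<omega>)))
            ((Amax / \<alpha>) *\<^sub>R integral\<^sup>L M (\<lambda>\<omega>. lap (A t \<omega>) + transpose (lap (A t \<omega>))
                 - transpose (lap (A t \<omega>)) ** lap (A t \<omega>))))
       \<and> (\<forall>t. integral\<^sup>L M (\<lambda>\<omega>. (vmean (traj A x0 t \<omega>) - vmean x0)^2)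
              \<le> (Amax / \<alpha>) / (real CARD('n) + Amax / \<alpha>) * vvar x0)"
proof -
  have admissible: "AE \<omega> in M. admissible Amax \<alpha> (A t \<omega>)" for t
    using assms(5)[of t] assms(6)[of t] assms(9)[of t] assms(10)[of t]
    by eventually_elim (auto simp: admissible_def)
  interpret random_consensus M A Amax \<alpha>
    using assms(2,3,7,8,11) admissible
    by (intro random_consensus.intro[OF assms(1)] random_consensus_axioms.intro) auto
  show ?thesis
    using expected_laplacian_ineq expected_mean_deviation by blast
qed

end
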